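(* Let $P\in(0,1)$ be irrational and let $V\in\mathbb R^3$ be a good offset for $\Xi_P$. Then the tiling defined by $\Xi_{P,V}$ is coherent: for any two unit squares sharing an edge $e$, the letter of $e$ (as seen from each square) occurs in the label of one square if and only if it occurs in the label of the other.
   Context: Let $\Lambda_P\subset\mathbb R^3$ be the lattice generated by $(2,P,P),(0,2,0),(0,0,2)$, $X_P=\mathbb R^3/\Lambda_P$ with coordinates $(T,U_1,U_2)$ and fundamental domain $[-1,1]^3$, $\Xi_P(x,y)=(2Px+2y,2Px,2Px+2Py)\bmod\Lambda_P$, and for $V\in\mathbb R^3$, $\Xi_{P,V}=\Xi_P+V\bmod\Lambda_P$. Each fiber $\{T\}\times[-1,1]^2$ is partitioned: given $u_1\le u_2\le u_3$, the lines $U_1=u_i$, $U_2=u_i$ cut $[-1,1]^2$ into a $4\times4$ grid of rectangles indexed by (column $a$, row $b$), columns in increasing $U_1$, rows in increasing $U_2$. Special rectangles with single letters: for $T\in[-1,-1+P]$: $(u_1,u_2,u_3)=(T,1-P,2-P+T)$, W $(4,4)$, N $(1,3)$, E $(2,2)$, S $(3,1)$; for $T\in[-1+P,1-P]$: $(-1+P,T,1-P)$, N $(1,4)$, E $(3,3)$, W $(2,2)$, S $(4,1)$; for $T\in[1-P,1]$: $(-2+P+T,-1+P,T)$, N $(2,4)$, W $(3,3)$, S $(4,2)$, E $(1,1)$. A non-special rectangle gets the unordered pair of letters of the special rectangles in its column and in its row; special rectangles get the empty label. The pieces of the partition are the unions over all fibers of rectangles with a given label. Tile centers are the points $(m+\frac12,n+\frac12)$,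 $m,n\in\mathbb Z$, each the center of a unit square with edges N, S, E, W. $V$ is a good offset if $\Xi_{P,V}(c)$ lies in the interior of a piece for every tile center $c$; the tile at $c$ then carries the label of that piece, a label $\{X,Y\}$ meaning a segment joining the midpoints of edges $X$ and $Y$. *)

theory Defs
  imports "HOL-Analysis.Analysis"
begin

datatype letter = LN | LS | LE | LW

type_synonym pt3 = "real \<times> real \<times> real"

definition Lambda :: "real \<Rightarrow> pt3 set" where
  "Lambda P = {(2 * of_int i, P * of_int i + 2 * of_int j, P * of_int i + 2 * of_int k) | i j k :: int. True}"

definition regime_ok :: "real \<Rightarrow> nat \<Rightarrow> real \<Rightarrow> bool" where
  "regime_ok P r T =
     ((r = 1 \<and> -1 \<le> T \<and> T \<le> -1 + P) \<or>
      (r = 2 \<and> -1 + P \<le> T \<and> T \<le> 1 - P) \<or>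
      (r = 3 \<and> 1 - P \<le> T \<and> T \<le> 1))"

definition cutval :: "real \<Rightarrow> nat \<Rightarrow> real \<Rightarrow> nat \<Rightarrow> real" where
  "cutval P r T i =
     (if i = 0 then -1 else if i = 4 then 1 else
      (if r = 1 then (if i = 1 then T else if i = 2 then 1 - P else 2 - P + T)
       else if r = 2 then (if i = 1 then -1 + P else if i = 2 then T else 1 - P)
       else (if i = 1 then -2 + P + T else if i = 2 then -1 + P else T)))"

text \<open>Special rectangles (column, row) of each letter in each regime.\<close>
definition special :: "nat \<Rightarrow> letter \<Rightarrow> nat \<times> nat" where
  "special r X =
     (if r = 1 then (case X of LW \<Rightarrow> (4,4) | LN \<Rightarrow> (1,3) | LE \<Rightarrow> (2,2) | LS \<Rightarrow> (3,1))
      else if r = 2 then (case X of LN \<Rightarrow> (1,4) | LE \<Rightarrow> (3,3) | LW \<Rightarrow> (2,2) | LS \<Rightarrow> (4,1))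
      else (case X of LN \<Rightarrow> (2,4) | LW \<Rightarrow> (3,3) | LS \<Rightarrow> (4,2) | LE \<Rightarrow> (1,1)))"

definition rect_label :: "nat \<Rightarrow> nat \<Rightarrow> nat \<Rightarrow> letter set" where
  "rect_label r a b =
     (if (a, b) \<in> range (special r) then {}
      else {X. fst (special r X) = a} \<union> {Y. snd (special r Y) = b})"

definition rect :: "real \<Rightarrow> nat \<Rightarrow> real \<Rightarrow> nat \<Rightarrow> nat \<Rightarrow> (real \<times> real) set" where
  "rect P r T a b = {cutval P r T (a - 1) .. cutval P r T a} \<times> {cutval P r T (b - 1) .. cutval P r T b}"

definition fd_piece :: "real \<Rightarrow> letter set \<Rightarrow> pt3 set" where
  "fd_piece P L = {(T, U1, U2). -1 \<le> T \<and> T \<le> 1 \<and>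
      (\<exists>r a b. regime_ok P r T \<and> a \<in> {1..4} \<and> b \<in> {1..4} \<and>
               (U1, U2) \<in> rect P r T a b \<and> rect_label r a b = L)}"

text \<open>The piece, lifted to a Lambda_P-periodic subset of R^3 (preimage under the
  quotient map R^3 \<rightarrow> X_P).\<close>
definition piece :: "real \<Rightarrow> letter set \<Rightarrow> pt3 set" where
  "piece P L = {(t, u1, u2). \<exists>(l0, l1, l2) \<in> Lambda P. (t + l0, u1 + l1, u2 + l2) \<in> fd_piece P L}"

definition Xi :: "real \<Rightarrow> pt3 \<Rightarrow> real \<Rightarrow> real \<Rightarrow> pt3" where
  "Xi P V x y = (case V of (v0, v1, v2) \<Rightarrow>
      (2 * P * x + 2 * y + v0, 2 * P * x + v1, 2 * P * x + 2 * P * y + v2))"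

definition Xi_center :: "real \<Rightarrow> pt3 \<Rightarrow> int \<Rightarrow> int \<Rightarrow> pt3" where
  "Xi_center P V m n = Xi P V (of_int m + 1/2) (of_int n + 1/2)"

definition good_offset :: "real \<Rightarrow> pt3 \<Rightarrow> bool" where
  "good_offset P V = (\<forall>m n :: int. \<exists>L. Xi_center P V m n \<in> interior (piece P L))"

definition tiling_of :: "real \<Rightarrow> pt3 \<Rightarrow> (int \<Rightarrow> int \<Rightarrow> letter set) \<Rightarrow> bool" where
  "tiling_of P V lab = (\<forall>m n. Xi_center P V m n \<in> interior (piece P (lab m n)))"

definition coherent :: "(int \<Rightarrow> int \<Rightarrow> letter set) \<Rightarrow> bool" where
  "coherent lab = (\<forall>m n.
      (LE \<in> lab m n \<longleftrightarrow> LW \<in> lab (m + 1) n) \<and>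
      (LN \<in> lab m n \<longleftrightarrow> LS \<in> lab m (n + 1)))"

end

theory Submission
  imports Defs
begin

text \<open>
  All cut values of the fiber partition lie in \<open>\<int> + \<int>P\<close> or \<open>T + \<int> + \<int>P\<close>.  Call a point
  generic if none of \<open>T, U\<^sub>1, U\<^sub>2, U\<^sub>1 - T, U\<^sub>2 - T\<close> lies in \<open>\<int> + \<int>P\<close>: generic points are dense,
  and genericity survives translation by \<open>\<Lambda>\<^sub>P\<close> and by the steps \<open>(2P,2P,2P)\<close>, \<open>(2,0,2P)\<close>
  between neighbouring tile centres.  So one small generic perturbation keeps the images of a tile
  and of its right and upper neighbours inside their open pieces.  At a generic point the label
  contains a letter iff the point lies in exactly one of the column and the row of that letter's
  special rectangle.  After reduction modulo \<open>\<Lambda>\<^sub>P\<close>, the W-cells of the right neighbour are the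
  E-cells translated (or their complements, for both coordinates at once), and the S-cells of the
  upper neighbour are the N-cells translated with column and row exchanged; in both cases the
  exclusive-or deciding the shared edge letter is unchanged.
\<close>

definition int_comb :: "real \<Rightarrow> real set" where
  "int_comb P = {of_int a + of_int b * P | a b. True}"

lemma int_combI: "x = of_int a + of_int b * P \<Longrightarrow> x \<in> int_comb P"
  unfolding int_comb_def by blast

lemma int_comb_diff:
  assumes "x \<in> int_comb P" "y \<in> int_comb P" shows "x - y \<in> int_comb P"
proof -
  obtain a b c d :: int where "x = of_int a + of_int b * P" "y = of_int c + of_int d * P"
    using assms unfolding int_comb_def by blast
  then show ?thesis by (intro int_combI[of _ "a - c" "b - d"]) (simp add: algebra_simps)
qed

lemma int_comb_add:
  assumes "x \<in> int_comb P" "y \<in> int_comb P" shows "x + y \<in> int_comb P"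
  using int_comb_diff[OF assms(1) int_comb_diff[OF int_combI[of 0 0 0] assms(2)]] by simp

lemma add_int_comb_iff [simp]: "v \<in> int_comb P \<Longrightarrow> x + v \<in> int_comb P \<longleftrightarrow> x \<in> int_comb P"
  using int_comb_add int_comb_diff[of "x + v" P v] by auto

lemma countable_int_comb: "countable (int_comb P)"
proof -
  have "int_comb P = (\<lambda>(a, b). of_int a + of_int b * P) ` (UNIV :: (int \<times> int) set)"
    unfolding int_comb_def by auto
  then show ?thesis by simp
qed

lemma int_comb_boundary_values:
  "0 \<in> int_comb P" "-1 \<in> int_comb P" "1 \<in> int_comb P" "2 \<in> int_comb P" "2 * P \<in> int_comb P"
  "1 - P \<in> int_comb P" "-1 + P \<in> int_comb P" "2 - P \<in> int_comb P" "-2 + P \<in> int_comb P"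
  using int_combI[of _ 0 0 P] int_combI[of _ "-1" 0 P] int_combI[of _ 1 0 P] int_combI[of _ 2 0 P]
    int_combI[of _ 0 2 P] int_combI[of _ 1 "-1" P] int_combI[of _ "-1" 1 P]
    int_combI[of _ 2 "-1" P] int_combI[of _ "-2" 1 P]
  by simp_all

definition generic :: "real \<Rightarrow> pt3 \<Rightarrow> bool" where
  "generic P = (\<lambda>(T, U1, U2). T \<notin> int_comb P \<and> U1 \<notin> int_comb P \<and> U2 \<notin> int_comb P \<and>
                              U1 - T \<notin> int_comb P \<and> U2 - T \<notin> int_comb P)"

lemma generic_add:
  assumes "v \<in> int_comb P \<times> int_comb P \<times> int_comb P"
  shows "generic P (x + v) \<longleftrightarrow> generic P x"
proof -
  obtain T U1 U2 v0 v1 v2 where x: "x = (T, U1, U2)" and v: "v = (v0, v1, v2)"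
    by (metis prod.exhaust)
  have "v0 \<in> int_comb P" "v1 \<in> int_comb P" "v2 \<in> int_comb P"
    using assms v by auto
  moreover have "U1 + v1 - (T + v0) \<in> int_comb P \<longleftrightarrow> U1 - T \<in> int_comb P"
    using add_int_comb_iff[OF int_comb_diff[OF \<open>v1 \<in> int_comb P\<close> \<open>v0 \<in> int_comb P\<close>], of "U1 - T"]
    by (simp add: algebra_simps)
  moreover have "U2 + v2 - (T + v0) \<in> int_comb P \<longleftrightarrow> U2 - T \<in> int_comb P"
    using add_int_comb_iff[OF int_comb_diff[OF \<open>v2 \<in> int_comb P\<close> \<open>v0 \<in> int_comb P\<close>], of "U2 - T"]
    by (simp add: algebra_simps)
  ultimately show ?thesis
    unfolding x v generic_def by simp
qed

lemma Lambda_subset_int_comb: "Lambda P \<subseteq> int_comb P \<times> int_comb P \<times> int_comb P"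
proof
  fix l assume "l \<in> Lambda P"
  then obtain i j k :: int
    where "l = (2 * of_int i, P * of_int i + 2 * of_int j, P * of_int i + 2 * of_int k)"
    unfolding Lambda_def by blast
  then show "l \<in> int_comb P \<times> int_comb P \<times> int_comb P"
    using int_combI[of _ "2 * i" 0 P] int_combI[of _ "2 * j" i P] int_combI[of _ "2 * k" i P]
    by (simp add: ac_simps)
qed

lemma Lambda_diff:
  assumes "l \<in> Lambda P" "l' \<in> Lambda P"
  shows "l - l' \<in> Lambda P"
proof -
  obtain i j k i' j' k' :: int
    where "l = (2 * of_int i, P * of_int i + 2 * of_int j, P * of_int i + 2 * of_int k)"
      and "l' = (2 * of_int i', P * of_int i' + 2 * of_int j', P * of_int i' + 2 * of_int k')"
    using assms unfolding Lambda_def by blast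
  then have "l - l' = (2 * of_int (i - i'), P * of_int (i - i') + 2 * of_int (j - j'),
                       P * of_int (i - i') + 2 * of_int (k - k'))"
    by (simp add: algebra_simps)
  then show ?thesis unfolding Lambda_def by blast
qed

lemma countable_affine_preimage:
  fixes c :: real
  assumes "countable Z" "c \<noteq> 0"
  shows "countable {s. a + c * s \<in> Z}"
proof -
  have "{s. a + c * s \<in> Z} = (\<lambda>z. (z - a) / c) ` Z"
  proof (intro set_eqI iffI)
    fix s assume "s \<in> {s. a + c * s \<in> Z}"
    then show "s \<in> (\<lambda>z. (z - a) / c) ` Z"
      using assms(2) by (intro image_eqI[of _ _ "a + c * s"]) auto
  qed (use assms(2) in auto)
  then show ?thesis using assms(1) by simp
qed

text \<open>Along the line through \<open>x\<close> in direction \<open>(1, 2, 3)\<close> each genericity condition fails for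
  only countably many parameters.\<close>

lemma generic_in_open:
  assumes "open S" "x \<in> S"
  shows "\<exists>y\<in>S. generic P y"
proof -
  obtain e where "e > 0" and ball: "ball x e \<subseteq> S"
    using assms open_contains_ball by blast
  obtain T U1 U2 where x: "x = (T, U1, U2)" by (metis prod.exhaust)
  define d :: pt3 where "d = (1, 2, 3)"
  define bad where "bad = {s. T + s \<in> int_comb P} \<union> {s. U1 + 2 * s \<in> int_comb P}
    \<union> {s. U2 + 3 * s \<in> int_comb P} \<union> {s. (U1 - T) + s \<in> int_comb P}
    \<union> {s. (U2 - T) + 2 * s \<in> int_comb P}"
  have aff: "countable {s. a + c * s \<in> int_comb P}" if "c \<noteq> 0" for c a :: real
    using countable_affine_preimage[OF countable_int_comb that] .
  have "countable bad"
    unfolding bad_def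
    using aff[of 1 T] aff[of 2 U1] aff[of 3 U2] aff[of 1 "U1 - T"] aff[of 2 "U2 - T"] by simp
  have "norm d > 0" unfolding d_def by (simp add: zero_prod_def)
  then have "uncountable {0 <..< e / norm d}"
    using \<open>e > 0\<close> uncountable_open_interval by simp
  then have "\<not> {0 <..< e / norm d} \<subseteq> bad"
    using \<open>countable bad\<close> countable_subset by blast
  then obtain s where s: "s \<in> {0 <..< e / norm d}" "s \<notin> bad"
    by blast
  have "dist x (x + s *\<^sub>R d) = s * norm d"
    using s by (simp add: dist_norm)
  also have "\<dots> < e"
    using s \<open>norm d > 0\<close> by (simp add: field_simps)
  finally have "x + s *\<^sub>R d \<in> S" using ball by auto
  moreover have "generic P (x + s *\<^sub>R d)"
    using s unfolding bad_def generic_def x d_def by (simp add: algebra_simps)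
  ultimately show ?thesis by blast
qed

definition regime :: "real \<Rightarrow> real \<Rightarrow> nat" where
  "regime P T = (if T < -1 + P then 1 else if T < 1 - P then 2 else 3)"

definition cell :: "real \<Rightarrow> real \<Rightarrow> nat \<Rightarrow> real set" where
  "cell P T i = {cutval P (regime P T) T (i - 1) ..< cutval P (regime P T) T i}"

definition col_cell :: "real \<Rightarrow> real \<Rightarrow> letter \<Rightarrow> real set" where
  "col_cell P T X = cell P T (fst (special (regime P T) X))"

definition row_cell :: "real \<Rightarrow> real \<Rightarrow> letter \<Rightarrow> real set" where
  "row_cell P T X = cell P T (snd (special (regime P T) X))"

text \<open>Off the cut lines this is membership of \<open>X\<close> in the label of the rectangle containing
  \<open>(U\<^sub>1, U\<^sub>2)\<close> (\<open>fd_piece_generic\<close>).\<close>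

definition label_has :: "real \<Rightarrow> letter \<Rightarrow> pt3 \<Rightarrow> bool" where
  "label_has P X = (\<lambda>(T, U1, U2). (U1 \<in> col_cell P T X) \<noteq> (U2 \<in> row_cell P T X))"

lemma row_cell_eq_col_cell:
  "row_cell P T LE = col_cell P T LE" "row_cell P T LW = col_cell P T LW"
  "row_cell P T LN = col_cell P T LS" "row_cell P T LS = col_cell P T LN"
  by (simp_all add: row_cell_def col_cell_def special_def)

lemma col_cell_LE:
  "P < 1 \<Longrightarrow> col_cell P T LE = (if T < 1 - P then {T ..< 1 - P} else {-1 ..< -2 + P + T})"
  by (simp add: col_cell_def cell_def special_def cutval_def regime_def)

lemma col_cell_LW: "col_cell P T LW = (if T < -1 + P then {2 - P + T ..< 1} else {-1 + P ..< T})"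
  by (simp add: col_cell_def cell_def special_def cutval_def regime_def)

lemma col_cell_LN: "col_cell P T LN =
    (if T < -1 + P then {-1 ..< T} else if T < 1 - P then {-1 ..< -1 + P} else {-2 + P + T ..< -1 + P})"
  by (simp add: col_cell_def cell_def special_def cutval_def regime_def)

lemma col_cell_LS: "col_cell P T LS =
    (if T < -1 + P then {1 - P ..< 2 - P + T} else if T < 1 - P then {1 - P ..< 1} else {T ..< 1})"
  by (simp add: col_cell_def cell_def special_def cutval_def regime_def)

lemma shift_multiple_of_two_cases:
  fixes a b c :: real
  assumes "-1 \<le> a" "a < 1" "-1 \<le> b" "b < 1" "-2 < c" "c < 2" "b = a + c + 2 * of_int j"
  shows "j = -1 \<or> j = 0 \<or> j = 1"
proof -
  have "-2 < real_of_int j" "real_of_int j < 2" using assms by linarith+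
  then show ?thesis by linarith
qed

lemma col_cell_LN_LS:
  assumes "0 < P" "P < 1" "-1 \<le> U" "U < 1" "-1 \<le> U'" "U' < 1" "U' = U - P + 2 * of_int j"
  shows "U \<in> col_cell P T LN \<longleftrightarrow> U' \<in> col_cell P T LS"
proof -
  have "j = -1 \<or> j = 0 \<or> j = 1"
    using shift_multiple_of_two_cases[of U U' "-P"] assms by simp
  then show ?thesis
    using assms unfolding col_cell_LN col_cell_LS by (elim disjE) auto
qed

text \<open>\<open>T' < T\<close> exactly when the step in \<open>T\<close> wraps around; as the answer does not depend on \<open>U\<close>,
  both coordinates of a point flip together.\<close>

lemma col_cell_LE_LW:
  assumes "0 < P" "P < 1" "-1 \<le> T" "T < 1" "-1 \<le> T'" "T' < 1"
    and "-1 \<le> U" "U < 1" "-1 \<le> U'" "U' < 1"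
    and "T' = T + 2 * P + 2 * of_int i" "U' = U + 2 * P + P * of_int i + 2 * of_int j"
  shows "(U \<in> col_cell P T LE \<longleftrightarrow> U' \<in> col_cell P T' LW) \<longleftrightarrow> T' < T"
proof -
  have "i = -1 \<or> i = 0"
    using shift_multiple_of_two_cases[of T T' "2 * P" i] assms by force
  moreover have "j = -1 \<or> j = 0 \<or> j = 1" if "i = -1 \<or> i = 0"
    using shift_multiple_of_two_cases[of U U' "2 * P + P * of_int i" j] assms that by auto
  ultimately show ?thesis
    using assms unfolding col_cell_LE[OF \<open>P < 1\<close>] col_cell_LW by (elim disjE) auto
qed

definition fund_box :: "pt3 set" where
  "fund_box = {-1 ..< 1} \<times> {-1 ..< 1} \<times> {-1 ..< 1}"

lemma label_has_LE_LW:
  assumes "0 < P" "P < 1" "z \<in> fund_box" "z' \<in> fund_box" "z' - z - (2 * P, 2 * P, 2 * P) \<in> Lambda P"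
  shows "label_has P LE z \<longleftrightarrow> label_has P LW z'"
proof -
  obtain T U1 U2 T' U1' U2' where z: "z = (T, U1, U2)" and z': "z' = (T', U1', U2')"
    by (metis prod.exhaust)
  obtain i j k :: int where "T' - T - 2 * P = 2 * of_int i"
    "U1' - U1 - 2 * P = P * of_int i + 2 * of_int j" "U2' - U2 - 2 * P = P * of_int i + 2 * of_int k"
    using assms(5) unfolding z z' Lambda_def by auto
  moreover have "-1 \<le> T" "T < 1" "-1 \<le> T'" "T' < 1" "-1 \<le> U1" "U1 < 1" "-1 \<le> U1'" "U1' < 1"
    "-1 \<le> U2" "U2 < 1" "-1 \<le> U2'" "U2' < 1"
    using assms(3,4) unfolding z z' fund_box_def by auto
  ultimately have "(U1 \<in> col_cell P T LE \<longleftrightarrow> U1' \<in> col_cell P T' LW) \<longleftrightarrow> T' < T"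
    "(U2 \<in> col_cell P T LE \<longleftrightarrow> U2' \<in> col_cell P T' LW) \<longleftrightarrow> T' < T"
    by (intro col_cell_LE_LW[OF assms(1,2), where i = i and j = j]
          col_cell_LE_LW[OF assms(1,2), where i = i and j = k]; linarith)+
  then show ?thesis
    unfolding z z' label_has_def row_cell_eq_col_cell by auto
qed

lemma label_has_LN_LS:
  assumes "0 < P" "P < 1" "z \<in> fund_box" "z' \<in> fund_box" "z' - z - (2, 0, 2 * P) \<in> Lambda P"
  shows "label_has P LN z \<longleftrightarrow> label_has P LS z'"
proof -
  obtain T U1 U2 T' U1' U2' where z: "z = (T, U1, U2)" and z': "z' = (T', U1', U2')"
    by (metis prod.exhaust)
  obtain i j k :: int where i: "T' - T - 2 = 2 * of_int i"
    and j: "U1' - U1 = P * of_int i + 2 * of_int j" and k: "U2' - U2 - 2 * P = P * of_int i + 2 * of_int k"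
    using assms(5) unfolding z z' Lambda_def by auto
  have "i = -1"
    using i assms(3,4) unfolding z z' fund_box_def by auto
  with i j k have "T' = T" "U1' = U1 - P + 2 * of_int j" "U2 = U2' - P + 2 * of_int (- k)"
    by auto
  moreover have "-1 \<le> U1" "U1 < 1" "-1 \<le> U1'" "U1' < 1" "-1 \<le> U2" "U2 < 1" "-1 \<le> U2'" "U2' < 1"
    using assms(3,4) unfolding z z' fund_box_def by auto
  ultimately have "U1 \<in> col_cell P T LN \<longleftrightarrow> U1' \<in> col_cell P T' LS"
    "U2' \<in> col_cell P T LN \<longleftrightarrow> U2 \<in> col_cell P T' LS"
    using col_cell_LN_LS[OF assms(1,2), of U1 U1' j T] col_cell_LN_LS[OF assms(1,2), of U2' U2 "- k" T]
    by simp_all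
  then show ?thesis
    unfolding z z' label_has_def row_cell_eq_col_cell \<open>T' = T\<close> by auto
qed

lemma special_fst_eq_iff: "fst (special r X) = fst (special r Y) \<longleftrightarrow> X = Y"
  by (cases X; cases Y) (simp_all add: special_def)

lemma special_snd_eq_iff: "snd (special r X) = snd (special r Y) \<longleftrightarrow> X = Y"
  by (cases X; cases Y) (simp_all add: special_def)

lemma special_in_grid: "fst (special r X) \<in> {1..4}" "snd (special r X) \<in> {1..4}"
  by (cases X; simp add: special_def)+

lemma mem_rect_label_iff:
  "X \<in> rect_label r a b \<longleftrightarrow> (fst (special r X) = a) \<noteq> (snd (special r X) = b)"
proof (cases "(a, b) \<in> range (special r)")
  case True
  then obtain Y where "(a, b) = special r Y" by auto
  then have "a = fst (special r Y)" "b = snd (special r Y)" by (metis fst_conv, metis snd_conv)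
  then show ?thesis
    using True unfolding rect_label_def by (simp add: special_fst_eq_iff special_snd_eq_iff)
next
  case False
  then have "\<not> (fst (special r X) = a \<and> snd (special r X) = b)"
    by (metis prod.collapse rangeI)
  then show ?thesis
    using False unfolding rect_label_def by auto
qed

lemma regime_ok_imp_regime:
  assumes "P < 1" "regime_ok P r T" "T \<noteq> -1 + P" "T \<noteq> 1 - P"
  shows "r = regime P T"
  using assms unfolding regime_ok_def regime_def by auto

lemma mono_on_cutval:
  assumes "0 < P" "P < 1" "-1 \<le> T" "T \<le> 1"
  shows "mono_on {0..4} (cutval P (regime P T) T)"
proof (rule mono_onI)
  fix i j :: nat assume "i \<in> {0..4}" "j \<in> {0..4}" "i \<le> j"
  then have "i \<in> {0, 1, 2, 3, 4}" "j \<in> {0, 1, 2, 3, 4}" by auto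
  then show "cutval P (regime P T) T i \<le> cutval P (regime P T) T j"
    using assms \<open>i \<le> j\<close> unfolding cutval_def regime_def by auto
qed

lemma cutval_cases:
  "cutval P r T i \<in> {-1, 1, 1 - P, -1 + P, T, 2 - P + T, -2 + P + T}"
  unfolding cutval_def by auto

lemma generic_coord_ne_cutval:
  assumes "U \<notin> int_comb P" "U - T \<notin> int_comb P"
  shows "U \<noteq> cutval P r T i"
  using cutval_cases[of P r T i] assms int_comb_boundary_values by auto

lemma mono_on_index_iff:
  fixes f :: "nat \<Rightarrow> real"
  assumes "mono_on {0..n} f" "a \<in> {1..n}" "c \<in> {1..n}" "f (a - 1) < U" "U < f a"
  shows "a = c \<longleftrightarrow> f (c - 1) \<le> U \<and> U < f c"
proof (cases a c rule: linorder_cases)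
  case less
  have "f a \<le> f (c - 1)" by (rule mono_onD[OF assms(1)]; use assms(2,3) less in auto)
  then show ?thesis using less assms(5) by auto
next
  case greater
  have "f c \<le> f (a - 1)" by (rule mono_onD[OF assms(1)]; use assms(2,3) greater in auto)
  then show ?thesis using greater assms(4) by auto
qed (use assms in auto)

lemma generic_coordinate_cell:
  assumes "0 < P" "P < 1" "-1 \<le> T" "T \<le> 1" "a \<in> {1..4}"
    and "U \<in> {cutval P (regime P T) T (a - 1) .. cutval P (regime P T) T a}"
    and "U \<notin> int_comb P" "U - T \<notin> int_comb P"
  shows "-1 < U \<and> U < 1" "c \<in> {1..4} \<Longrightarrow> a = c \<longleftrightarrow> U \<in> cell P T c"
proof -
  let ?f = "cutval P (regime P T) T"
  have mono: "mono_on {0..4} ?f" using mono_on_cutval assms(1-4) .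
  have "U \<noteq> ?f (a - 1)" "U \<noteq> ?f a"
    using generic_coord_ne_cutval[OF assms(7,8)] by blast+
  then have strict: "?f (a - 1) < U" "U < ?f a"
    using assms(6) by auto
  have "?f 0 \<le> ?f (a - 1)" "?f a \<le> ?f 4"
    by (rule mono_onD[OF mono]; use assms(5) in auto)+
  moreover have "?f 0 = -1" "?f 4 = 1"
    by (simp_all add: cutval_def)
  ultimately show "-1 < U \<and> U < 1"
    using strict by linarith
  show "a = c \<longleftrightarrow> U \<in> cell P T c" if "c \<in> {1..4}"
    using mono_on_index_iff[OF mono assms(5) that strict] unfolding cell_def by simp
qed

lemma fd_piece_generic:
  assumes "0 < P" "P < 1" "z \<in> fd_piece P L" "generic P z"
  shows "z \<in> fund_box" "X \<in> L \<longleftrightarrow> label_has P X z"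
proof -
  obtain T U1 U2 where z: "z = (T, U1, U2)" by (metis prod.exhaust)
  obtain r a b where "regime_ok P r T" "a \<in> {1..4}" "b \<in> {1..4}" "-1 \<le> T" "T \<le> 1"
    and rect: "(U1, U2) \<in> rect P r T a b" and L: "rect_label r a b = L"
    using assms(3) unfolding z fd_piece_def by blast
  have gen: "T \<notin> int_comb P" "U1 \<notin> int_comb P" "U1 - T \<notin> int_comb P"
    "U2 \<notin> int_comb P" "U2 - T \<notin> int_comb P"
    using assms(4) unfolding z generic_def by auto
  then have "T \<noteq> -1" "T \<noteq> 1" "T \<noteq> -1 + P" "T \<noteq> 1 - P"
    using int_comb_boundary_values(2,3,7,6) by metis+
  then have "r = regime P T"
    using regime_ok_imp_regime \<open>P < 1\<close> \<open>regime_ok P r T\<close> by blast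
  note U1 = generic_coordinate_cell[OF assms(1,2) \<open>-1 \<le> T\<close> \<open>T \<le> 1\<close> \<open>a \<in> {1..4}\<close> _ gen(2,3)]
   and U2 = generic_coordinate_cell[OF assms(1,2) \<open>-1 \<le> T\<close> \<open>T \<le> 1\<close> \<open>b \<in> {1..4}\<close> _ gen(4,5)]
  have "U1 \<in> {cutval P (regime P T) T (a - 1) .. cutval P (regime P T) T a}"
    "U2 \<in> {cutval P (regime P T) T (b - 1) .. cutval P (regime P T) T b}"
    using rect \<open>r = regime P T\<close> unfolding rect_def by auto
  note U1 = U1[OF this(1)] and U2 = U2[OF this(2)]
  show "z \<in> fund_box"
    using U1(1) U2(1) \<open>-1 \<le> T\<close> \<open>T \<noteq> 1\<close> \<open>T \<le> 1\<close> unfolding z fund_box_def by auto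
  have "fst (special r X) = a \<longleftrightarrow> U1 \<in> col_cell P T X"
    using U1(2)[OF special_in_grid(1), of r X] \<open>r = regime P T\<close> unfolding col_cell_def by auto
  moreover have "snd (special r X) = b \<longleftrightarrow> U2 \<in> row_cell P T X"
    using U2(2)[OF special_in_grid(2), of r X] \<open>r = regime P T\<close> unfolding row_cell_def by auto
  ultimately show "X \<in> L \<longleftrightarrow> label_has P X z"
    unfolding z L[symmetric] mem_rect_label_iff label_has_def by simp
qed

lemma piece_generic_representative:
  assumes "0 < P" "P < 1" "y \<in> piece P L" "generic P y"
  obtains z where "z \<in> fund_box" "z - y \<in> Lambda P" "\<And>X. X \<in> L \<longleftrightarrow> label_has P X z"
proof -
  obtain l where l: "l \<in> Lambda P" "y + l \<in> fd_piece P L"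
    using assms(3) unfolding piece_def by (cases y) auto
  have "generic P (y + l)"
    using generic_add[of l P y] l(1) Lambda_subset_int_comb assms(4) by blast
  note rep = fd_piece_generic[OF assms(1,2) l(2) this]
  show ?thesis
  proof (rule that)
    show "y + l \<in> fund_box" using rep(1) .
    show "y + l - y \<in> Lambda P" using l(1) by simp
    show "X \<in> L \<longleftrightarrow> label_has P X (y + l)" for X using rep(2) .
  qed
qed

lemma generic_point_in_translates:
  assumes "x \<in> interior A" "x + v \<in> interior B" "x + w \<in> interior C"
  obtains y where "generic P y" "y \<in> A" "y + v \<in> B" "y + w \<in> C"
proof -
  define S where "S = interior A \<inter> (\<lambda>y. y + v) -` interior B \<inter> (\<lambda>y. y + w) -` interior C"
  have "open S"
    unfolding S_def by (intro open_Int continuous_open_vimage open_interior continuous_intros)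
  moreover have "x \<in> S"
    using assms unfolding S_def by simp
  ultimately obtain y where "y \<in> S" "generic P y"
    using generic_in_open by blast
  then show ?thesis
    using that interior_subset unfolding S_def by blast
qed

lemma Xi_center_step_right: "Xi_center P V (m + 1) n = Xi_center P V m n + (2 * P, 2 * P, 2 * P)"
  unfolding Xi_center_def Xi_def by (cases V) (simp add: algebra_simps)

lemma Xi_center_step_up: "Xi_center P V m (n + 1) = Xi_center P V m n + (2, 0, 2 * P)"
  unfolding Xi_center_def Xi_def by (cases V) (simp add: algebra_simps)

theorem lemma3p7:
  fixes P :: real and V :: pt3 and lab :: "int \<Rightarrow> int \<Rightarrow> letter set"
  assumes "0 < P" "P < 1" "P \<notin> \<rat>"
    and "good_offset P V"
    and "tiling_of P V lab"
  shows "coherent lab"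
  unfolding coherent_def
proof (intro allI conjI)
  fix m n
  let ?vE = "(2 * P, 2 * P, 2 * P) :: pt3" and ?vN = "(2, 0, 2 * P) :: pt3"
  obtain y where y: "generic P y" "y \<in> piece P (lab m n)"
    "y + ?vE \<in> piece P (lab (m + 1) n)" "y + ?vN \<in> piece P (lab m (n + 1))"
    using generic_point_in_translates[of "Xi_center P V m n"] \<open>tiling_of P V lab\<close>
    unfolding tiling_of_def by (metis Xi_center_step_right Xi_center_step_up)
  have "generic P (y + ?vE)" "generic P (y + ?vN)"
    using y(1) generic_add int_comb_boundary_values by simp_all
  obtain z where z: "z \<in> fund_box" "z - y \<in> Lambda P" "\<And>X. X \<in> lab m n \<longleftrightarrow> label_has P X z"
    using piece_generic_representative[OF assms(1,2) y(2,1)] by blast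
  obtain zE where zE: "zE \<in> fund_box" "zE - (y + ?vE) \<in> Lambda P"
      "\<And>X. X \<in> lab (m + 1) n \<longleftrightarrow> label_has P X zE"
    using piece_generic_representative[OF assms(1,2) y(3) \<open>generic P (y + ?vE)\<close>] by blast
  obtain zN where zN: "zN \<in> fund_box" "zN - (y + ?vN) \<in> Lambda P"
      "\<And>X. X \<in> lab m (n + 1) \<longleftrightarrow> label_has P X zN"
    using piece_generic_representative[OF assms(1,2) y(4) \<open>generic P (y + ?vN)\<close>] by blast
  have "zE - z - ?vE \<in> Lambda P" "zN - z - ?vN \<in> Lambda P"
    using Lambda_diff[OF zE(2) z(2)] Lambda_diff[OF zN(2) z(2)] by (simp_all add: algebra_simps)
  then show "LE \<in> lab m n \<longleftrightarrow> LW \<in> lab (m + 1) n" "LN \<in> lab m n \<longleftrightarrow> LS \<in> lab m (n + 1)"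
    using label_has_LE_LW[OF assms(1,2) z(1) zE(1)] label_has_LN_LS[OF assms(1,2) z(1) zN(1)] z zE zN
    by simp_all
qed

end
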